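(* For $\lambda>1$ let $\mu:=\sqrt{1-\lambda^{-2}}$ and define on $(-1,\mu^{-1}-1)$ $$\gamma_\lambda(\varepsilon):=\frac{(1+\mu(1+\varepsilon))^{1+\mu(1+\varepsilon)}}{(1-\mu(1+\varepsilon))^{1-\mu(1+\varepsilon)}}\cdot\frac{(1-\mu)^{1-\mu}}{(1+\mu)^{1+\mu}}\left(\frac{\lambda}{e}\right)^{2\mu\varepsilon}.$$ Let $\lambda_0>1$. Then there are constants $c_0,c_1,c_2>0$ depending only on $\lambda_0$ such that for every $\lambda\ge\lambda_0$: (i) for every $\varepsilon$ with $|\varepsilon|\lambda^2\le c_0$ one has $1-c_1\lambda^2\varepsilon^2\le\gamma_\lambda(\varepsilon)\le1-c_2\lambda^2\varepsilon^2$; (ii) $\gamma_\lambda$ is monotone increasing on $(-1,0)$ and monotone decreasing on $(0,\mu^{-1}-1)$; (iii) $0<\gamma_\lambda(\varepsilon)\le1-\frac{c_2}{c_0}\lambda^{-2}$ for all $\varepsilon\in(-1,\mu^{-1}-1)\setminus(-c_0\lambda^{-2},c_0\lambda^{-2})$. *)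

theory Defs
  imports Complex_Main
begin

definition mu_of :: "real \<Rightarrow> real" where
  "mu_of lam = sqrt (1 - lam powr (-2))"

definition gamma :: "real \<Rightarrow> real \<Rightarrow> real" where
  "gamma lam \<epsilon> =
     (let \<mu> = mu_of lam; a = 1 + \<mu> * (1 + \<epsilon>); b = 1 - \<mu> * (1 + \<epsilon>) in
      (a powr a / b powr b) * ((1 - \<mu>) powr (1 - \<mu>) / (1 + \<mu>) powr (1 + \<mu>))
        * (lam / exp 1) powr (2 * \<mu> * \<epsilon>))"

end

theory Submission
  imports Defs
begin

(* Write gamma lam = exp G with G = gamma_exponent lam, so G 0 = 0. Differentiating the powers
   x^x gives G' s = mu ln (lam^2 (1 - mu^2 (1 + s)^2)) = mu ln (1 - (lam^2 - 1) s (2 + s)),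
   using lam^2 mu^2 = lam^2 - 1. Since ln (1 - u) has the sign of -u and is comparable to -u
   for small |u|, s G' s is nonpositive on the whole domain, which gives (ii), and lies between
   -6 lam^2 s^2 and -mu^3 lam^2 s^2 when |s| lam^2 <= 1/4. Integrating these bounds for G + c s^2
   gives G e of order -lam^2 e^2, hence (i) via 1 + x <= exp x and exp (-y) <= 1 - y/2 on [0, 1];
   (iii) follows from (ii) and (i) at e = +-c0 / lam^2. *)

lemma powr_self: "0 < x \<Longrightarrow> x powr x = exp (x * ln x)" for x :: real
  by (simp add: powr_def mult.commute)

lemma ln_one_minus_le: "u < 1 \<Longrightarrow> ln (1 - u) \<le> - u" for u :: real
  using ln_le_minus_one[of "1 - u"] by simp

lemma ln_one_minus_ge: "u < 1 \<Longrightarrow> - u / (1 - u) \<le> ln (1 - u)" for u :: real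
  using ln_le_minus_one[of "1 / (1 - u)"] by (simp add: ln_div field_simps)

lemma mult_ln_one_minus_nonpos:
  fixes s u :: real
  assumes "u < 1" "0 \<le> s * u"
  shows "s * ln (1 - u) \<le> 0"
proof (cases "0 \<le> s")
  case True
  then show ?thesis using assms by (cases "s = 0") (auto simp: zero_le_mult_iff mult_nonneg_nonpos)
next
  case False
  then show ?thesis using assms by (auto simp: zero_le_mult_iff mult_nonpos_nonneg)
qed

lemma ln_one_minus_eq_mult:
  fixes u :: real
  assumes "\<bar>u\<bar> \<le> 9/16"
  obtains c where "16/25 \<le> c" "c \<le> 16/7" "ln (1 - u) = - c * u"
proof (cases "u = 0")
  case True
  then show ?thesis using that[of 1] by simp
next
  case False
  have u: "u < 1" "7/16 \<le> 1 - u" "1 - u \<le> 25/16" using assms by auto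
  have lo: "- u / (1 - u) \<le> ln (1 - u)" and hi: "ln (1 - u) \<le> - u"
    using ln_one_minus_ge ln_one_minus_le u by auto
  have "16/25 \<le> - ln (1 - u) / u \<and> - ln (1 - u) / u \<le> 16/7"
  proof (cases "0 < u")
    case True
    have "u / (1 - u) \<le> 16/7 * u" using True u by (simp add: field_simps)
    then have "16/25 * u \<le> - ln (1 - u)" "- ln (1 - u) \<le> 16/7 * u" using lo hi True by auto
    then show ?thesis unfolding pos_le_divide_eq[OF True] pos_divide_le_eq[OF True] by linarith
  next
    case False
    then have "u < 0" using \<open>u \<noteq> 0\<close> by simp
    have "16/25 \<le> 1 / (1 - u)" using u by (simp add: field_simps)
    then have "u / (1 - u) \<le> 16/25 * u"
      using mult_left_mono_neg[of "16/25" "1 / (1 - u)" u] \<open>u < 0\<close> by (simp add: mult.commute)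
    then have "- ln (1 - u) \<le> 16/25 * u" "16/7 * u \<le> - ln (1 - u)" using lo hi \<open>u < 0\<close> by auto
    then show ?thesis unfolding neg_le_divide_eq[OF \<open>u < 0\<close>] neg_divide_le_eq[OF \<open>u < 0\<close>]
      by linarith
  qed
  then show ?thesis using that[of "- ln (1 - u) / u"] False by simp
qed

lemma exp_minus_le_one_minus_half:
  fixes y :: real
  assumes "0 \<le> y" "y \<le> 1"
  shows "exp (- y) \<le> 1 - y / 2"
proof -
  have "exp (- y) \<le> 1 / (1 + y)"
    using exp_ge_add_one_self[of y] assms by (simp add: exp_minus field_simps)
  also have "\<dots> \<le> 1 - y / 2"
    using assms by (simp add: field_simps mult_left_le_one_le power2_eq_square)
  finally show ?thesis .
qed

lemma le_at_0_if_mult_deriv_nonpos: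
  fixes h h' :: "real \<Rightarrow> real"
  assumes deriv: "\<And>s. \<bar>s\<bar> \<le> \<bar>e\<bar> \<Longrightarrow> (h has_real_derivative h' s) (at s)"
    and sign: "\<And>s. \<bar>s\<bar> \<le> \<bar>e\<bar> \<Longrightarrow> s * h' s \<le> 0"
  shows "h e \<le> h 0"
proof -
  have cont: "continuous_on {a..b} h" if "\<bar>a\<bar> \<le> \<bar>e\<bar>" "\<bar>b\<bar> \<le> \<bar>e\<bar>" for a b
  proof (rule DERIV_atLeastAtMost_imp_continuous_on)
    fix x assume "a \<le> x" "x \<le> b"
    then have "\<bar>x\<bar> \<le> \<bar>e\<bar>" using that by auto
    then show "\<exists>y. (h has_real_derivative y) (at x)" using deriv by blast
  qed
  show ?thesis
  proof (cases "0 \<le> e")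
    case True
    show ?thesis
    proof (rule DERIV_nonpos_imp_decreasing_open[OF True])
      fix x assume "0 < x" "x < e"
      then show "\<exists>y. (h has_real_derivative y) (at x) \<and> y \<le> 0"
        using deriv[of x] sign[of x] by (auto simp: mult_le_0_iff)
    next
      show "continuous_on {0..e} h" by (rule cont) auto
    qed
  next
    case False
    show ?thesis
    proof (rule DERIV_nonneg_imp_increasing_open[of e 0 h])
      show "e \<le> 0" using False by simp
    next
      fix x assume "e < x" "x < 0"
      then show "\<exists>y. (h has_real_derivative y) (at x) \<and> 0 \<le> y"
        using deriv[of x] sign[of x] by (auto simp: mult_le_0_iff)
    next
      show "continuous_on {e..0} h" by (rule cont) auto
    qed
  qed
qed

lemma le_neg_quadratic_if_mult_deriv_le:
  fixes f f' :: "real \<Rightarrow> real"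
  assumes "f 0 = 0"
    and deriv: "\<And>s. \<bar>s\<bar> \<le> \<bar>e\<bar> \<Longrightarrow> (f has_real_derivative f' s) (at s)"
    and bound: "\<And>s. \<bar>s\<bar> \<le> \<bar>e\<bar> \<Longrightarrow> s * f' s \<le> - 2 * c * s^2"
  shows "f e \<le> - c * e^2"
proof -
  have "(\<lambda>x. f x + c * x^2) e \<le> (\<lambda>x. f x + c * x^2) 0"
  proof (rule le_at_0_if_mult_deriv_nonpos)
    fix s assume s: "\<bar>s\<bar> \<le> \<bar>e\<bar>"
    show "((\<lambda>x. f x + c * x^2) has_real_derivative f' s + c * (2 * s)) (at s)"
      using deriv[OF s] by (auto intro!: derivative_eq_intros)
    show "s * (f' s + c * (2 * s)) \<le> 0"
      using bound[OF s] by (simp add: algebra_simps power2_eq_square)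
  qed
  then show ?thesis using assms(1) by simp
qed

definition self_pow_log :: "real \<Rightarrow> real" where
  "self_pow_log x = (1 + x) * ln (1 + x) - (1 - x) * ln (1 - x)"

lemma self_pow_ratio_eq_exp:
  assumes "\<bar>x\<bar> < 1"
  shows "(1 + x) powr (1 + x) / (1 - x) powr (1 - x) = exp (self_pow_log x)"
proof -
  have "0 < 1 + x" "0 < 1 - x" using assms by (simp_all add: abs_less_iff)
  then show ?thesis by (simp add: powr_self self_pow_log_def exp_diff)
qed

lemma has_real_derivative_self_pow_log:
  assumes "\<bar>x\<bar> < 1"
  shows "(self_pow_log has_real_derivative ln (1 - x^2) + 2) (at x)"
proof -
  have pos: "0 < 1 + x" "0 < 1 - x" using assms by (simp_all add: abs_less_iff)
  have "ln (1 - x^2) = ln ((1 + x) * (1 - x))"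
    by (rule arg_cong[where f = ln]) (simp add: algebra_simps power2_eq_square)
  also have "\<dots> = ln (1 + x) + ln (1 - x)" using pos by (simp add: ln_mult)
  finally have "ln (1 - x^2) + 2 = (ln (1 + x) + 1) + (ln (1 - x) + 1)" by simp
  moreover have "(self_pow_log has_real_derivative (ln (1 + x) + 1) + (ln (1 - x) + 1)) (at x)"
    unfolding self_pow_log_def[abs_def] using pos by (auto intro!: derivative_eq_intros)
  ultimately show ?thesis by (simp only:)
qed

lemma mu_of_sq:
  assumes "1 < lam"
  shows "(mu_of lam)^2 = 1 - 1 / lam^2"
proof -
  have "1 / lam^2 < 1" using assms by (simp add: one_less_power)
  then show ?thesis using assms by (simp add: mu_of_def powr_minus powr_realpow divide_inverse)
qed

lemma mu_of_pos: "1 < lam \<Longrightarrow> 0 < mu_of lam"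
  by (simp add: mu_of_def powr_minus powr_realpow inverse_less_1_iff one_less_power)

lemma mu_of_less_1: "1 < lam \<Longrightarrow> mu_of lam < 1"
  by (simp add: mu_of_def powr_minus powr_realpow)

lemma lam_sq_mult_mu_of_sq: "1 < lam \<Longrightarrow> lam^2 * (mu_of lam)^2 = lam^2 - 1"
  by (simp add: mu_of_sq field_simps)

lemma mu_of_mono:
  assumes "1 < lam0" "lam0 \<le> lam"
  shows "mu_of lam0 \<le> mu_of lam"
proof (rule power2_le_imp_le)
  have "1 / lam^2 \<le> 1 / lam0^2"
    using assms by (intro divide_left_mono power_mono) auto
  then show "(mu_of lam0)^2 \<le> (mu_of lam)^2"
    using assms by (simp add: mu_of_sq)
  show "0 \<le> mu_of lam" using assms mu_of_pos[of lam] by simp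
qed

lemma mem_gamma_domain_iff:
  assumes "1 < lam"
  shows "e \<in> {-1<..<1 / mu_of lam - 1} \<longleftrightarrow> -1 < e \<and> mu_of lam * (1 + e) < 1"
proof -
  have "1 + e < 1 / mu_of lam \<longleftrightarrow> mu_of lam * (1 + e) < 1"
    using mu_of_pos[OF assms] by (simp add: less_divide_eq mult.commute)
  then show ?thesis by auto
qed

definition gamma_exponent :: "real \<Rightarrow> real \<Rightarrow> real" where
  "gamma_exponent lam e =
     self_pow_log (mu_of lam * (1 + e)) - self_pow_log (mu_of lam) + 2 * mu_of lam * e * (ln lam - 1)"

definition gamma_exponent_deriv :: "real \<Rightarrow> real \<Rightarrow> real" where
  "gamma_exponent_deriv lam s = mu_of lam * ln (1 - (lam^2 - 1) * s * (2 + s))"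

lemma gamma_eq_exp_gamma_exponent:
  assumes "1 < lam" "-1 < e" "mu_of lam * (1 + e) < 1"
  shows "gamma lam e = exp (gamma_exponent lam e)"
proof -
  define m where "m = mu_of lam"
  have m: "0 < m" "m < 1" using mu_of_pos mu_of_less_1 assms(1) m_def by auto
  have "0 < m * (1 + e)" using m assms(2) by simp
  then have "\<bar>m * (1 + e)\<bar> < 1" using assms(3) m_def by simp
  then have r1: "(1 + m * (1 + e)) powr (1 + m * (1 + e)) / (1 - m * (1 + e)) powr (1 - m * (1 + e))
      = exp (self_pow_log (m * (1 + e)))"
    by (rule self_pow_ratio_eq_exp)
  have r2: "(1 - m) powr (1 - m) / (1 + m) powr (1 + m) = inverse (exp (self_pow_log m))"
    using m inverse_divide[of "(1 + m) powr (1 + m)" "(1 - m) powr (1 - m)"]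
    by (simp add: self_pow_ratio_eq_exp)
  have "gamma lam e = exp (self_pow_log (m * (1 + e))) * inverse (exp (self_pow_log m))
      * (lam / exp 1) powr (2 * m * e)"
    unfolding gamma_def Let_def m_def[symmetric] r1 r2 ..
  also have "(lam / exp 1) powr (2 * m * e) = exp (2 * m * e * (ln lam - 1))"
    using assms(1) by (simp add: powr_def ln_div)
  finally show ?thesis by (simp add: gamma_exponent_def m_def exp_add exp_diff divide_inverse)
qed

lemma gamma_pos:
  assumes "1 < lam" "e \<in> {-1<..<1 / mu_of lam - 1}"
  shows "0 < gamma lam e"
  using assms gamma_eq_exp_gamma_exponent mem_gamma_domain_iff by simp

lemma lam_sq_mult_one_minus_sq:
  assumes "1 < lam"
  shows "lam^2 * (1 - (mu_of lam * (1 + s))^2) = 1 - (lam^2 - 1) * s * (2 + s)"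
proof -
  have "lam^2 * (1 - (mu_of lam * (1 + s))^2) = lam^2 - (lam^2 * (mu_of lam)^2) * (1 + s)^2"
    unfolding power_mult_distrib by (simp add: right_diff_distrib mult.assoc)
  also have "\<dots> = lam^2 - (lam^2 - 1) * (1 + s)^2"
    using lam_sq_mult_mu_of_sq[OF assms] by simp
  finally show ?thesis by (simp add: algebra_simps power2_eq_square)
qed

lemma gamma_exponent_deriv_arg_less_1:
  assumes "1 < lam" "-1 < s" "mu_of lam * (1 + s) < 1"
  shows "(lam^2 - 1) * s * (2 + s) < 1"
proof -
  have "0 < mu_of lam * (1 + s)" using mu_of_pos assms by simp
  then have "(mu_of lam * (1 + s))^2 < 1" using assms(3) by (simp add: power_less_one_iff abs_square_less_1)
  then have "0 < lam^2 * (1 - (mu_of lam * (1 + s))^2)" using assms(1) by simp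
  then show ?thesis using lam_sq_mult_one_minus_sq[OF assms(1), of s] by simp
qed

lemma has_real_derivative_gamma_exponent:
  assumes "1 < lam" "-1 < s" "mu_of lam * (1 + s) < 1"
  shows "(gamma_exponent lam has_real_derivative gamma_exponent_deriv lam s) (at s)"
proof -
  define m where "m = mu_of lam"
  have "0 < m" using mu_of_pos assms m_def by simp
  then have "0 < m * (1 + s)" using assms(2) by simp
  then have x: "\<bar>m * (1 + s)\<bar> < 1" using assms(3) m_def by simp
  have "lam^2 * (1 - (m * (1 + s))^2) > 0"
    using lam_sq_mult_one_minus_sq gamma_exponent_deriv_arg_less_1 assms m_def by simp
  then have "ln (lam^2 * (1 - (m * (1 + s))^2)) = 2 * ln lam + ln (1 - (m * (1 + s))^2)"
    using assms(1) by (simp add: ln_mult ln_realpow zero_less_mult_iff)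
  then have "(ln (1 - (m * (1 + s))^2) + 2) * m + 2 * m * (ln lam - 1)
      = m * ln (lam^2 * (1 - (m * (1 + s))^2))"
    by (simp add: algebra_simps)
  also have "\<dots> = gamma_exponent_deriv lam s"
    using lam_sq_mult_one_minus_sq[OF assms(1)] by (simp add: gamma_exponent_deriv_def m_def)
  finally have deriv_eq: "(ln (1 - (m * (1 + s))^2) + 2) * m + 2 * m * (ln lam - 1)
      = gamma_exponent_deriv lam s" .
  have lin: "((\<lambda>e. m * (1 + e)) has_real_derivative m) (at s)"
    by (auto intro!: derivative_eq_intros)
  have "((\<lambda>e. self_pow_log (m * (1 + e))) has_real_derivative
      (ln (1 - (m * (1 + s))^2) + 2) * m) (at s)"
    using DERIV_chain2[where f = self_pow_log and g = "\<lambda>e. m * (1 + e)",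
        OF has_real_derivative_self_pow_log[OF x] lin]
    by simp
  then show ?thesis
    using deriv_eq unfolding gamma_exponent_def[abs_def] m_def[symmetric]
    by (auto intro!: derivative_eq_intros)
qed

lemma mult_gamma_exponent_deriv_nonpos:
  assumes "1 < lam" "-1 < s" "mu_of lam * (1 + s) < 1"
  shows "s * gamma_exponent_deriv lam s \<le> 0"
proof -
  have "0 \<le> (lam^2 - 1) * s^2 * (2 + s)"
    using assms(1,2) by (simp add: one_le_power)
  then have "0 \<le> s * ((lam^2 - 1) * s * (2 + s))" by (simp add: power2_eq_square mult_ac)
  then have "s * ln (1 - (lam^2 - 1) * s * (2 + s)) \<le> 0"
    using mult_ln_one_minus_nonpos gamma_exponent_deriv_arg_less_1[OF assms] by simp
  then have "mu_of lam * (s * ln (1 - (lam^2 - 1) * s * (2 + s))) \<le> 0"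
    using mu_of_pos[OF assms(1)] by (simp add: mult_nonneg_nonpos)
  then show ?thesis by (simp add: gamma_exponent_deriv_def mult.left_commute)
qed

lemma gamma_mono_on:
  assumes "1 < lam"
  shows "mono_on {-1<..<0} (gamma lam)"
proof (rule mono_onI)
  fix r s :: real
  assume rs: "r \<in> {-1<..<0}" "s \<in> {-1<..<0}" "r \<le> s"
  have dom: "-1 < x" "mu_of lam * (1 + x) < 1" if "x \<in> {-1<..<0}" for x
  proof -
    have "mu_of lam * (1 + x) < mu_of lam * 1"
      using that mu_of_pos[OF assms] by (intro mult_strict_left_mono) auto
    then show "-1 < x" "mu_of lam * (1 + x) < 1" using that mu_of_less_1[OF assms] by auto
  qed
  have "gamma_exponent lam r \<le> gamma_exponent lam s"
  proof (rule DERIV_nonneg_imp_nondecreasing[OF rs(3)])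
    fix x assume "r \<le> x" "x \<le> s"
    then have x: "x \<in> {-1<..<0}" using rs by auto
    have "x * gamma_exponent_deriv lam x \<le> 0" using mult_gamma_exponent_deriv_nonpos[OF assms dom[OF x]] .
    then have "0 \<le> gamma_exponent_deriv lam x" using x by (simp add: mult_le_0_iff)
    then show "\<exists>y. (gamma_exponent lam has_real_derivative y) (at x) \<and> 0 \<le> y"
      using has_real_derivative_gamma_exponent[OF assms dom[OF x]] by blast
  qed
  then show "gamma lam r \<le> gamma lam s"
    by (simp add: gamma_eq_exp_gamma_exponent[OF assms dom[OF rs(1)]]
        gamma_eq_exp_gamma_exponent[OF assms dom[OF rs(2)]])
qed

lemma gamma_antimono_on:
  assumes "1 < lam"
  shows "antimono_on {0<..<1 / mu_of lam - 1} (gamma lam)"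
proof (rule monotone_onI)
  fix r s :: real
  assume rs: "r \<in> {0<..<1 / mu_of lam - 1}" "s \<in> {0<..<1 / mu_of lam - 1}" "r \<le> s"
  have dom: "-1 < x" "mu_of lam * (1 + x) < 1" if "x \<in> {0<..<1 / mu_of lam - 1}" for x
    using that mem_gamma_domain_iff[OF assms, of x] by auto
  have "gamma_exponent lam s \<le> gamma_exponent lam r"
  proof (rule DERIV_nonpos_imp_nonincreasing[OF rs(3)])
    fix x assume "r \<le> x" "x \<le> s"
    then have x: "x \<in> {0<..<1 / mu_of lam - 1}" using rs by auto
    have "x * gamma_exponent_deriv lam x \<le> 0" using mult_gamma_exponent_deriv_nonpos[OF assms dom[OF x]] .
    then have "gamma_exponent_deriv lam x \<le> 0" using x by (simp add: mult_le_0_iff)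
    then show "\<exists>y. (gamma_exponent lam has_real_derivative y) (at x) \<and> y \<le> 0"
      using has_real_derivative_gamma_exponent[OF assms dom[OF x]] by blast
  qed
  then show "gamma lam s \<le> gamma lam r"
    by (simp add: gamma_eq_exp_gamma_exponent[OF assms dom[OF rs(1)]]
        gamma_eq_exp_gamma_exponent[OF assms dom[OF rs(2)]])
qed

lemma gamma_exponent_deriv_arg_bounds:
  fixes lam s :: real
  assumes "1 < lam" "\<bar>s\<bar> * lam^2 \<le> 1/4"
  shows "\<bar>(lam^2 - 1) * s * (2 + s)\<bar> \<le> 9/16"
    and "7/4 * (lam^2 - 1) * s^2 \<le> s * ((lam^2 - 1) * s * (2 + s))"
    and "s * ((lam^2 - 1) * s * (2 + s)) \<le> 9/4 * lam^2 * s^2"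
proof -
  have lam: "1 \<le> lam^2" using assms(1) by (intro one_le_power) simp
  have "\<bar>s\<bar> * 1 \<le> \<bar>s\<bar> * lam^2" using lam by (intro mult_left_mono) auto
  then have s: "7/4 \<le> 2 + s" "2 + s \<le> 9/4" using assms(2) by auto
  have eq: "((lam^2 - 1) * s^2) * (2 + s) = s * ((lam^2 - 1) * s * (2 + s))"
    by (simp add: power2_eq_square algebra_simps)
  have "7/4 * (lam^2 - 1) * s^2 = ((lam^2 - 1) * s^2) * (7/4)" by simp
  also have "\<dots> \<le> ((lam^2 - 1) * s^2) * (2 + s)"
    using lam s by (intro mult_left_mono) auto
  finally show "7/4 * (lam^2 - 1) * s^2 \<le> s * ((lam^2 - 1) * s * (2 + s))" unfolding eq .
  have "((lam^2 - 1) * s^2) * (2 + s) \<le> (lam^2 * s^2) * (9/4)"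
    using lam s by (intro mult_mono) auto
  then show "s * ((lam^2 - 1) * s * (2 + s)) \<le> 9/4 * lam^2 * s^2" unfolding eq by simp
  have "\<bar>(lam^2 - 1) * s * (2 + s)\<bar> = (lam^2 - 1) * \<bar>s\<bar> * (2 + s)"
    using lam s by (simp add: abs_mult)
  also have "\<dots> \<le> (lam^2 * \<bar>s\<bar>) * (9/4)"
    using lam s by (intro mult_mono) auto
  also have "\<dots> \<le> (1/4) * (9/4)"
    using assms(2) by (intro mult_right_mono) (auto simp: mult.commute)
  finally show "\<bar>(lam^2 - 1) * s * (2 + s)\<bar> \<le> 9/16" by simp
qed

lemma small_in_gamma_domain:
  assumes "1 < lam" "\<bar>s\<bar> * lam^2 \<le> 1/4"
  shows "-1 < s" "mu_of lam * (1 + s) < 1"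
proof -
  have "\<bar>s\<bar> * 1 \<le> \<bar>s\<bar> * lam^2" using assms(1) by (intro mult_left_mono) (auto simp: one_le_power)
  then show "-1 < s" using assms(2) by auto
  have "0 < lam^2 * (1 - (mu_of lam * (1 + s))^2)"
    using lam_sq_mult_one_minus_sq[OF assms(1)] gamma_exponent_deriv_arg_bounds(1)[OF assms] by simp
  then have "(mu_of lam * (1 + s))^2 < 1" using assms(1) by (simp add: zero_less_mult_iff)
  then show "mu_of lam * (1 + s) < 1" by (simp add: abs_square_less_1)
qed

lemma mult_gamma_exponent_deriv_bounds:
  assumes "1 < lam" "\<bar>s\<bar> * lam^2 \<le> 1/4"
  shows "s * gamma_exponent_deriv lam s \<le> - ((mu_of lam)^3 * lam^2 * s^2)"
    and "- 6 * lam^2 * s^2 \<le> s * gamma_exponent_deriv lam s"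
proof -
  define m where "m = mu_of lam"
  define u where "u = (lam^2 - 1) * s * (2 + s)"
  have m: "0 < m" "m < 1" using mu_of_pos mu_of_less_1 assms(1) m_def by auto
  obtain c where c: "16/25 \<le> c" "c \<le> 16/7" "ln (1 - u) = - c * u"
    using ln_one_minus_eq_mult gamma_exponent_deriv_arg_bounds(1)[OF assms] u_def by blast
  have eq: "s * gamma_exponent_deriv lam s = - (m * c) * (s * u)"
    unfolding gamma_exponent_deriv_def m_def[symmetric] u_def[symmetric] c(3) by (simp add: mult_ac)
  have lo: "7/4 * (m^2 * lam^2 * s^2) \<le> s * u"
    using gamma_exponent_deriv_arg_bounds(2)[OF assms] lam_sq_mult_mu_of_sq[OF assms(1)]
    by (simp add: u_def m_def mult_ac)
  moreover have "0 \<le> m^2 * lam^2 * s^2" by simp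
  ultimately have su: "0 \<le> s * u" by linarith
  have hi: "s * u \<le> 9/4 * (lam^2 * s^2)"
    using gamma_exponent_deriv_arg_bounds(3)[OF assms] by (simp add: u_def mult_ac)
  have "0 \<le> m^3 * lam^2 * s^2" using m by simp
  then have "m^3 * lam^2 * s^2 \<le> 28/25 * (m^3 * lam^2 * s^2)" by linarith
  also have "\<dots> = (m * (16/25)) * (7/4 * (m^2 * lam^2 * s^2))"
    by (simp add: power2_eq_square power3_eq_cube mult_ac)
  also have "\<dots> \<le> (m * c) * (s * u)"
  proof (rule mult_mono[OF _ lo])
    show "m * (16/25) \<le> m * c" using m c by (intro mult_left_mono) auto
  qed (use m c in auto)
  finally show "s * gamma_exponent_deriv lam s \<le> - ((mu_of lam)^3 * lam^2 * s^2)"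
    using eq m_def by simp
  have "(m * c) * (s * u) \<le> (16/7) * (9/4 * (lam^2 * s^2))"
  proof (rule mult_mono)
    show "m * c \<le> 16/7" using m c mult_left_le_one_le[of c m] by linarith
  qed (use m c su hi in auto)
  moreover have "0 \<le> lam^2 * s^2" by simp
  ultimately have "(m * c) * (s * u) \<le> 6 * (lam^2 * s^2)" by linarith
  then show "- 6 * lam^2 * s^2 \<le> s * gamma_exponent_deriv lam s"
    using eq by (simp add: mult.assoc)
qed

lemma gamma_exponent_bounds:
  assumes "1 < lam" "\<bar>e\<bar> * lam^2 \<le> 1/4"
  shows "- 3 * lam^2 * e^2 \<le> gamma_exponent lam e"
    and "gamma_exponent lam e \<le> - ((mu_of lam)^3 / 2 * lam^2) * e^2"
proof -
  have small: "\<bar>s\<bar> * lam^2 \<le> 1/4" if "\<bar>s\<bar> \<le> \<bar>e\<bar>" for s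
    using mult_right_mono[OF that, of "lam^2"] assms(2) by simp
  have deriv: "(gamma_exponent lam has_real_derivative gamma_exponent_deriv lam s) (at s)"
    if "\<bar>s\<bar> \<le> \<bar>e\<bar>" for s
    using has_real_derivative_gamma_exponent small_in_gamma_domain[OF assms(1) small[OF that]]
      assms(1) by blast
  have zero: "gamma_exponent lam 0 = 0" by (simp add: gamma_exponent_def)
  show "gamma_exponent lam e \<le> - ((mu_of lam)^3 / 2 * lam^2) * e^2"
  proof (rule le_neg_quadratic_if_mult_deriv_le[OF zero deriv])
    fix s assume "\<bar>s\<bar> \<le> \<bar>e\<bar>"
    then show "s * gamma_exponent_deriv lam s \<le> - 2 * ((mu_of lam)^3 / 2 * lam^2) * s^2"
      using mult_gamma_exponent_deriv_bounds(1)[OF assms(1) small] by simp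
  qed
  have "- gamma_exponent lam e \<le> - (- 3 * lam^2) * e^2"
  proof (rule le_neg_quadratic_if_mult_deriv_le)
    fix s assume "\<bar>s\<bar> \<le> \<bar>e\<bar>"
    then show "((\<lambda>x. - gamma_exponent lam x) has_real_derivative - gamma_exponent_deriv lam s) (at s)"
      using deriv by (auto intro!: derivative_eq_intros)
    show "s * - gamma_exponent_deriv lam s \<le> - 2 * (- 3 * lam^2) * s^2"
      using mult_gamma_exponent_deriv_bounds(2)[OF assms(1) small[OF \<open>\<bar>s\<bar> \<le> \<bar>e\<bar>\<close>]] by simp
  qed (simp add: zero)
  then show "- 3 * lam^2 * e^2 \<le> gamma_exponent lam e" by simp
qed

lemma gamma_bounds:
  assumes "1 < lam" "\<bar>e\<bar> * lam^2 \<le> 1/4"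
  shows "1 - 3 * lam^2 * e^2 \<le> gamma lam e"
    and "gamma lam e \<le> 1 - (mu_of lam)^3 / 4 * lam^2 * e^2"
proof -
  have gamma: "gamma lam e = exp (gamma_exponent lam e)"
    using gamma_eq_exp_gamma_exponent small_in_gamma_domain assms by blast
  show "1 - 3 * lam^2 * e^2 \<le> gamma lam e"
    using gamma_exponent_bounds(1)[OF assms] exp_ge_add_one_self[of "gamma_exponent lam e"]
    unfolding gamma by linarith
  define y where "y = (mu_of lam)^3 * (lam^2 * e^2) / 2"
  have "\<bar>e\<bar> * 1 \<le> \<bar>e\<bar> * lam^2" using assms(1) by (intro mult_left_mono) auto
  then have "lam^2 * e^2 \<le> 1"
    using mult_mono[OF assms(2), of "\<bar>e\<bar>" "1/4"] assms(2) by (simp add: power2_eq_square mult_ac)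
  moreover have "0 \<le> (mu_of lam)^3" "(mu_of lam)^3 \<le> 1"
    using mu_of_pos[OF assms(1)] mu_of_less_1[OF assms(1)] by (auto intro!: power_le_one)
  ultimately have "(mu_of lam)^3 * (lam^2 * e^2) \<le> 1 * 1" by (intro mult_mono) auto
  then have y: "0 \<le> y" "y \<le> 1" using \<open>0 \<le> (mu_of lam)^3\<close> unfolding y_def by auto
  have "gamma lam e \<le> exp (- y)"
    using gamma_exponent_bounds(2)[OF assms] unfolding gamma y_def by simp
  also have "\<dots> \<le> 1 - y / 2" by (rule exp_minus_le_one_minus_half[OF y])
  finally show "gamma lam e \<le> 1 - (mu_of lam)^3 / 4 * lam^2 * e^2" by (simp add: y_def)
qed

lemma gamma_le_away_from_0:
  assumes "1 < lam" "0 < d" "d * lam^2 \<le> 1/4"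
    and e: "e \<in> {-1<..<1 / mu_of lam - 1}" "d \<le> \<bar>e\<bar>"
  shows "gamma lam e \<le> 1 - (mu_of lam)^3 / 4 * lam^2 * d^2"
proof -
  have small: "\<bar>d\<bar> * lam^2 \<le> 1/4" "\<bar>-d\<bar> * lam^2 \<le> 1/4" using assms(2,3) by auto
  have "-1 < -d" "mu_of lam * (1 + d) < 1"
    using small_in_gamma_domain(1)[OF assms(1) small(2)] small_in_gamma_domain(2)[OF assms(1) small(1)]
    by auto
  show ?thesis
  proof (cases "0 \<le> e")
    case True
    have "d \<in> {-1<..<1 / mu_of lam - 1}"
      using mem_gamma_domain_iff[OF assms(1), of d] assms(2) \<open>mu_of lam * (1 + d) < 1\<close> by linarith
    then have "d \<in> {0<..<1 / mu_of lam - 1}" using assms(2) by simp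
    moreover have "e \<in> {0<..<1 / mu_of lam - 1}" "d \<le> e" using e True assms(2) by auto
    ultimately have "gamma lam e \<le> gamma lam d"
      using monotone_onD[OF gamma_antimono_on[OF assms(1)]] by blast
    then show ?thesis using gamma_bounds(2)[OF assms(1) small(1)] by simp
  next
    case False
    then have "e \<in> {-1<..<0}" "-d \<in> {-1<..<0}" "e \<le> -d"
      using e assms(2) \<open>-1 < -d\<close> by auto
    then have "gamma lam e \<le> gamma lam (-d)"
      by (rule mono_onD[OF gamma_mono_on[OF assms(1)]])
    then show ?thesis using gamma_bounds(2)[OF assms(1) small(2)] by simp
  qed
qed

lemma gamma_le_uniform:
  assumes "1 < lam0" "lam0 \<le> lam" "\<bar>e\<bar> * lam^2 \<le> 1/4"
  shows "gamma lam e \<le> 1 - (mu_of lam0)^3 / 256 * lam^2 * e^2"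
proof -
  have lam: "1 < lam" using assms by simp
  have "(mu_of lam0)^3 \<le> (mu_of lam)^3"
    using mu_of_pos[OF assms(1)] mu_of_mono[OF assms(1,2)] by (intro power_mono) auto
  moreover have "0 < (mu_of lam0)^3" using mu_of_pos[OF assms(1)] by simp
  ultimately have "(mu_of lam0)^3 / 256 \<le> (mu_of lam)^3 / 4" by linarith
  then have "(mu_of lam0)^3 / 256 * lam^2 * e^2 \<le> (mu_of lam)^3 / 4 * lam^2 * e^2"
    by (intro mult_right_mono) auto
  then show ?thesis using gamma_bounds(2)[OF lam assms(3)] by linarith
qed

lemma gamma_le_outside_window:
  assumes "1 < lam0" "lam0 \<le> lam"
    and e: "e \<in> {-1<..<1 / mu_of lam - 1} - {-(1/4) / lam^2<..<(1/4) / lam^2}"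
  shows "gamma lam e \<le> 1 - (mu_of lam0)^3 / 64 / lam^2"
proof -
  have lam: "1 < lam" using assms by simp
  define d where "d = (1/4) / lam^2"
  have d: "0 < d" "d * lam^2 \<le> 1/4" "d \<le> \<bar>e\<bar>" using e lam by (auto simp: d_def)
  have "(mu_of lam0)^3 \<le> (mu_of lam)^3"
    using mu_of_pos[OF assms(1)] mu_of_mono[OF assms(1,2)] by (intro power_mono) auto
  then have "(mu_of lam0)^3 / 64 / lam^2 \<le> (mu_of lam)^3 / 64 / lam^2"
    by (intro divide_right_mono) auto
  also have "\<dots> = (mu_of lam)^3 / 4 * lam^2 * d^2"
    using lam by (simp add: d_def field_simps power2_eq_square)
  finally show ?thesis
    using gamma_le_away_from_0[OF lam d(1,2) _ d(3)] e by auto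
qed

theorem lemmaA3:
  fixes lam0 :: real
  assumes "lam0 > 1"
  shows "\<exists>c0 c1 c2 :: real. c0 > 0 \<and> c1 > 0 \<and> c2 > 0 \<and>
    (\<forall>lam. lam \<ge> lam0 \<longrightarrow>
      (\<forall>\<epsilon>. \<epsilon> \<in> {-1<..<1 / mu_of lam - 1} \<and> \<bar>\<epsilon>\<bar> * lam^2 \<le> c0 \<longrightarrow>
          1 - c1 * lam^2 * \<epsilon>^2 \<le> gamma lam \<epsilon> \<and> gamma lam \<epsilon> \<le> 1 - c2 * lam^2 * \<epsilon>^2)
      \<and> mono_on {-1<..<0} (gamma lam)
      \<and> antimono_on {0<..<1 / mu_of lam - 1} (gamma lam)
      \<and> (\<forall>\<epsilon>. \<epsilon> \<in> {-1<..<1 / mu_of lam - 1} - {-c0 / lam^2<..<c0 / lam^2} \<longrightarrow>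
          0 < gamma lam \<epsilon> \<and> gamma lam \<epsilon> \<le> 1 - (c2 / c0) / lam^2))"
proof (rule exI[of _ "1/4"], rule exI[of _ 3], rule exI[of _ "(mu_of lam0)^3 / 256"],
    intro conjI allI impI)
  (* c2 is dictated by (iii): there c2 / c0 = 4 c2 must not exceed mu0^3 / 64, the value of the
     bound (i) at the window edge |e| = c0 / lam^2. *)
  show "(0::real) < 1/4" "(0::real) < 3" "0 < (mu_of lam0)^3 / 256"
    using mu_of_pos[OF assms] by simp_all
  fix lam e assume lam0: "lam0 \<le> lam"
  then have lam: "1 < lam" using assms by simp
  show "mono_on {-1<..<0} (gamma lam)" by (rule gamma_mono_on[OF lam])
  show "antimono_on {0<..<1 / mu_of lam - 1} (gamma lam)" by (rule gamma_antimono_on[OF lam])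
  show "1 - 3 * lam^2 * e^2 \<le> gamma lam e"
    and "gamma lam e \<le> 1 - (mu_of lam0)^3 / 256 * lam^2 * e^2"
    if "e \<in> {-1<..<1 / mu_of lam - 1} \<and> \<bar>e\<bar> * lam^2 \<le> 1/4"
    using gamma_bounds(1)[OF lam] gamma_le_uniform[OF assms lam0] that by auto
  show "0 < gamma lam e"
    and "gamma lam e \<le> 1 - ((mu_of lam0)^3 / 256 / (1/4)) / lam^2"
    if "e \<in> {-1<..<1 / mu_of lam - 1} - {-(1/4) / lam^2<..<(1/4) / lam^2}"
    using gamma_pos[OF lam] gamma_le_outside_window[OF assms lam0 that] that by auto
qed

end
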